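(* Let $(G,o)$ be a strong orientation of a cubic graph $G$. Let $e_1=u_1v_1$, $e_2=u_2v_2$ and $f=w_2w_1$ be pairwise non-adjacent edges of $G$ oriented $u_1\to v_1$, $u_2\to v_2$ and $w_2\to w_1$ in $(G,o)$, all three deletable in $(G,o)$. Let $G'$ be obtained from $G$ by subdividing $e_1$ with a new vertex $x_1$, subdividing $e_2$ with a new vertex $x_2$, subdividing $w_1w_2$ with new vertices $y_1,y_2$ so that it becomes the path $w_1y_1y_2w_2$, and adding the edges $x_1y_1$ and $x_2y_2$. Let $(G',o')$ be an orientation of $G'$ containing $u_1\to x_1$, $x_1\to v_1$, $y_1\to w_1$, $y_2\to y_1$, $w_2\to y_2$, $u_2\to x_2$, $x_2\to v_2$, with $o'(e)=o(e)$ for all other edges of $G'$ except $x_1y_1$ and $x_2y_2$. Then: (a) if $(G',o')$ contains $y_1\to x_1$ and $x_2\to y_2$, then $(G',o')$ is strong and $D(G',o')\supseteq (D(G,o)\setminus\{e_1,e_2,f\})\cup\{u_1x_1,x_1y_1,y_1w_1,y_2w_2,x_2y_2,x_2v_2\}$; (b) if $(G',o')$ contains $x_1\to y_1$ and $y_2\to x_2$, then $(G',o')$ is strong and $D(G',o')\supseteq (D(G,o)\setminus\{e_1,e_2,f\})\cup\{x_1v_1,y_1y_2,u_2x_2\}$.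
   Context: An orientation is strong if for every ordered pair of distinct vertices $u,v$ there is a directed $uv$-path. An edge $e$ is deletable in an orientation $(G,o)$ if the restriction of $o$ to $E(G)\setminus\{e\}$ is a strong orientation of $G-e$. $D(G,o)$ denotes the set of edges deletable in $(G,o)$. *)

theory Defs
  imports Main
begin

definition simple_graph :: "'a set \<Rightarrow> 'a set set \<Rightarrow> bool" where
  "simple_graph V E \<longleftrightarrow> finite V \<and>
     (\<forall>e\<in>E. \<exists>u v. e = {u, v} \<and> u \<noteq> v \<and> u \<in> V \<and> v \<in> V)"

definition degree :: "'a set set \<Rightarrow> 'a \<Rightarrow> nat" where
  "degree E v = card {e\<in>E. v \<in> e}"

definition cubic :: "'a set \<Rightarrow> 'a set set \<Rightarrow> bool" where
  "cubic V E \<longleftrightarrow> simple_graph V E \<and> (\<forall>v\<in>V. degree E v = 3)"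

definition orientation :: "'a set \<Rightarrow> 'a set set \<Rightarrow> ('a \<times> 'a) set \<Rightarrow> bool" where
  "orientation V E A \<longleftrightarrow> A \<subseteq> V \<times> V \<and> (\<forall>(u,v)\<in>A. {u, v} \<in> E) \<and>
     (\<forall>u v. {u, v} \<in> E \<longrightarrow> ((u, v) \<in> A \<longleftrightarrow> (v, u) \<notin> A))"

definition strong :: "'a set \<Rightarrow> ('a \<times> 'a) set \<Rightarrow> bool" where
  "strong V A \<longleftrightarrow> (\<forall>u\<in>V. \<forall>v\<in>V. u \<noteq> v \<longrightarrow> (u, v) \<in> A\<^sup>+)"

definition strong_orientation :: "'a set \<Rightarrow> 'a set set \<Rightarrow> ('a \<times> 'a) set \<Rightarrow> bool" where
  "strong_orientation V E A \<longleftrightarrow> orientation V E A \<and> strong V A"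

definition restrict_arcs :: "('a \<times> 'a) set \<Rightarrow> 'a set \<Rightarrow> ('a \<times> 'a) set" where
  "restrict_arcs A e = {(u, v) \<in> A. {u, v} \<noteq> e}"

definition deletable :: "'a set \<Rightarrow> 'a set set \<Rightarrow> ('a \<times> 'a) set \<Rightarrow> 'a set \<Rightarrow> bool" where
  "deletable V E A e \<longleftrightarrow> e \<in> E \<and> strong_orientation V (E - {e}) (restrict_arcs A e)"

definition D :: "'a set \<Rightarrow> 'a set set \<Rightarrow> ('a \<times> 'a) set \<Rightarrow> 'a set set" where
  "D V E A = {e\<in>E. deletable V E A e}"

end

theory Submission
  imports Defs
begin

text \<open>Every arc of the old orientation, except those of the deleted edge of \<open>G\<close>, survives in
  \<open>G'\<close> either literally or, for the three subdivided edges, as the directed paths \<open>u\<^sub>1x\<^sub>1v\<^sub>1\<close>,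
  \<open>u\<^sub>2x\<^sub>2v\<^sub>2\<close> and \<open>w\<^sub>2y\<^sub>2y\<^sub>1w\<^sub>1\<close>. So strong connectivity of a base orientation on the old vertices
  (the orientation of \<open>G\<close> itself or of \<open>G - e\<close> for a deletable \<open>e\<close>) carries over to \<open>G'\<close>, once
  every new vertex can reach and be reached from an old one. Deleting an edge on one of the
  three paths is compensated by the deletability of the corresponding edge of \<open>G\<close>, and the new
  vertices cut off by the deletion are reconnected through \<open>x\<^sub>1y\<^sub>1\<close> or \<open>x\<^sub>2y\<^sub>2\<close>; the orientation
  of these two edges decides which path edges this works for.\<close>

lemma strong_iff_rtrancl: "strong V A \<longleftrightarrow> (\<forall>u\<in>V. \<forall>v\<in>V. (u, v) \<in> A\<^sup>*)"
  unfolding strong_def by (auto simp: rtrancl_eq_or_trancl)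

lemma strong_from_strong_core:
  assumes "strong V B" and "B \<subseteq> C\<^sup>*"
    and "\<forall>x\<in>V'. \<exists>a\<in>V. (x, a) \<in> C\<^sup>*" and "\<forall>x\<in>V'. \<exists>a\<in>V. (a, x) \<in> C\<^sup>*"
  shows "strong V' C"
proof -
  have "B\<^sup>* \<subseteq> C\<^sup>*"
    using assms(2) by (metis rtrancl_subset_rtrancl)
  then have "\<forall>u\<in>V. \<forall>v\<in>V. (u, v) \<in> C\<^sup>*"
    using assms(1) by (auto simp: strong_iff_rtrancl)
  then show ?thesis
    using assms(3,4) unfolding strong_iff_rtrancl by (meson rtrancl_trans)
qed

lemma orientation_restrict_arcs:
  assumes "orientation V E A"
  shows "orientation V (E - {g}) (restrict_arcs A g)"
  unfolding orientation_def
proof (intro conjI allI impI)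
  show "restrict_arcs A g \<subseteq> V \<times> V" "\<forall>(u, v)\<in>restrict_arcs A g. {u, v} \<in> E - {g}"
    using assms unfolding orientation_def restrict_arcs_def by auto
  fix u v assume uv: "{u, v} \<in> E - {g}"
  then have "(u, v) \<in> A \<longleftrightarrow> (v, u) \<notin> A"
    using assms unfolding orientation_def by blast
  moreover have "{v, u} = {u, v}"
    by (rule insert_commute)
  ultimately show "(u, v) \<in> restrict_arcs A g \<longleftrightarrow> (v, u) \<notin> restrict_arcs A g"
    using uv unfolding restrict_arcs_def by simp
qed

lemma in_D_iff:
  assumes "orientation V E A"
  shows "g \<in> D V E A \<longleftrightarrow> g \<in> E \<and> strong V (restrict_arcs A g)"
  using orientation_restrict_arcs[OF assms]
  by (auto simp: D_def deletable_def strong_orientation_def)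

lemma orientation_loop_free:
  assumes "orientation V E A"
  shows "(a, a) \<notin> A"
  using assms unfolding orientation_def by (metis insert_absorb2 case_prodD)

lemma orientation_arc_unique:
  assumes "orientation V E A" and "(a, b) \<in> A" and "(p, q) \<in> A" and "{a, b} = {p, q}"
  shows "(a, b) = (p, q)"
  using assms unfolding orientation_def doubleton_eq_iff by blast

lemma restrict_arcs_arc:
  assumes "orientation V E A" and "(p, q) \<in> A"
  shows "restrict_arcs A {p, q} = A - {(p, q)}"
  using assms unfolding orientation_def restrict_arcs_def doubleton_eq_iff by fast

locale subdivision_gadget =
  fixes V :: "'a set" and E :: "'a set set" and A :: "('a \<times> 'a) set"
    and u1 v1 u2 v2 w1 w2 x1 x2 y1 y2 :: 'a
    and V' :: "'a set" and E' :: "'a set set" and A' :: "('a \<times> 'a) set"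
  assumes simple: "simple_graph V E"
    and orientation: "orientation V E A" and strong: "strong V A"
    and arcs: "(u1, v1) \<in> A" "(u2, v2) \<in> A" "(w2, w1) \<in> A"
    and subdivided_deletable: "{u1, v1} \<in> D V E A" "{u2, v2} \<in> D V E A" "{w2, w1} \<in> D V E A"
    and new: "x1 \<notin> V" "x2 \<notin> V" "y1 \<notin> V" "y2 \<notin> V"
    and new_distinct: "distinct [x1, x2, y1, y2]"
    and V'_eq: "V' = V \<union> {x1, x2, y1, y2}"
    and E'_eq: "E' = (E - {{u1, v1}, {u2, v2}, {w2, w1}}) \<union>
        {{u1, x1}, {x1, v1}, {u2, x2}, {x2, v2}, {w1, y1}, {y1, y2}, {y2, w2},
         {x1, y1}, {x2, y2}}"
    and orientation': "orientation V' E' A'"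
    and arcs': "(u1, x1) \<in> A'" "(x1, v1) \<in> A'" "(y1, w1) \<in> A'" "(y2, y1) \<in> A'"
               "(w2, y2) \<in> A'" "(u2, x2) \<in> A'" "(x2, v2) \<in> A'"
    and old_arcs': "\<And>a b. (a, b) \<in> A \<Longrightarrow> {a, b} \<notin> {{u1, v1}, {u2, v2}, {w2, w1}} \<Longrightarrow>
                  (a, b) \<in> A'"
begin

definition path_arcs :: "('a \<times> 'a) set" where
  "path_arcs = {(u1, x1), (x1, v1), (u2, x2), (x2, v2), (w2, y2), (y2, y1), (y1, w1)}"

lemma path_arcs_subset: "path_arcs \<subseteq> A'"
  using arcs' unfolding path_arcs_def by simp

lemma arcs_subset: "A \<subseteq> V \<times> V"
  using orientation unfolding orientation_def by blast

lemma edge_subset: "g \<in> E \<Longrightarrow> g \<subseteq> V"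
  using simple unfolding simple_graph_def by auto

lemma old_vertices: "u1 \<in> V" "v1 \<in> V" "u2 \<in> V" "v2 \<in> V" "w1 \<in> V" "w2 \<in> V"
  using arcs arcs_subset by auto

lemma distinct_vertices:
  "x1 \<noteq> x2" "x1 \<noteq> y1" "x1 \<noteq> y2" "x2 \<noteq> y1" "x2 \<noteq> y2" "y1 \<noteq> y2"
  "u1 \<noteq> v1" "u2 \<noteq> v2" "w2 \<noteq> w1"
  "a \<in> V \<Longrightarrow> z \<notin> V \<Longrightarrow> a \<noteq> z"
  using new_distinct arcs orientation_loop_free[OF orientation] by auto

lemma arc_cases:
  assumes "(a, b) \<in> A"
  shows "(a, b) \<in> {(u1, v1), (u2, v2), (w2, w1)} \<or> {a, b} \<notin> {{u1, v1}, {u2, v2}, {w2, w1}}"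
proof (cases "{a, b} \<in> {{u1, v1}, {u2, v2}, {w2, w1}}")
  case True
  then consider "{a, b} = {u1, v1}" | "{a, b} = {u2, v2}" | "{a, b} = {w2, w1}"
    by blast
  then show ?thesis
    using orientation_arc_unique[OF orientation assms arcs(1)]
      orientation_arc_unique[OF orientation assms arcs(2)]
      orientation_arc_unique[OF orientation assms arcs(3)]
    by cases simp_all
qed simp

lemma old_arc_in_restrict:
  assumes "(a, b) \<in> A" "{a, b} \<notin> {{u1, v1}, {u2, v2}, {w2, w1}}" "{a, b} \<noteq> g"
  shows "(a, b) \<in> restrict_arcs A' g"
  using assms old_arcs' unfolding restrict_arcs_def by blast

lemma old_arc_in_restrict_new_edge:
  assumes "(a, b) \<in> A" "{a, b} \<notin> {{u1, v1}, {u2, v2}, {w2, w1}}" "\<not> g \<subseteq> V"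
  shows "(a, b) \<in> restrict_arcs A' g"
proof (rule old_arc_in_restrict[OF assms(1,2)])
  show "{a, b} \<noteq> g"
    using assms(1,3) arcs_subset by auto
qed

lemma strong_if_routes:
  assumes "strong V B" and "B \<subseteq> A"
    and old: "\<And>a b. (a, b) \<in> B \<Longrightarrow> {a, b} \<notin> {{u1, v1}, {u2, v2}, {w2, w1}} \<Longrightarrow> (a, b) \<in> C"
    and rerouted: "\<forall>p \<in> {(u1, v1), (u2, v2), (w2, w1)} \<inter> B. p \<in> C\<^sup>*"
    and reach: "\<forall>x \<in> {x1, x2, y1, y2}. (\<exists>a\<in>V. (x, a) \<in> C\<^sup>*) \<and> (\<exists>a\<in>V. (a, x) \<in> C\<^sup>*)"
  shows "strong V' C"
proof (rule strong_from_strong_core[OF assms(1)])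
  show "B \<subseteq> C\<^sup>*"
  proof safe
    fix a b assume "(a, b) \<in> B"
    then show "(a, b) \<in> C\<^sup>*"
      using arc_cases[of a b] old[of a b] rerouted \<open>B \<subseteq> A\<close> by blast
  qed
  show "\<forall>x\<in>V'. \<exists>a\<in>V. (x, a) \<in> C\<^sup>*" "\<forall>x\<in>V'. \<exists>a\<in>V. (a, x) \<in> C\<^sup>*"
    using reach unfolding V'_eq by blast+
qed

lemma strong_if_paths_kept:
  assumes "strong V B" and "B \<subseteq> A"
    and "\<And>a b. (a, b) \<in> B \<Longrightarrow> {a, b} \<notin> {{u1, v1}, {u2, v2}, {w2, w1}} \<Longrightarrow> (a, b) \<in> C"
    and paths: "path_arcs \<subseteq> C"
  shows "strong V' C"
proof (rule strong_if_routes[OF assms(1-3)])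
  note walk = converse_rtrancl_into_rtrancl r_into_rtrancl
  have "(u1, v1) \<in> C\<^sup>*" "(u2, v2) \<in> C\<^sup>*" "(w2, w1) \<in> C\<^sup>*"
    using paths unfolding path_arcs_def by (meson insert_subset walk)+
  then show "\<forall>p \<in> {(u1, v1), (u2, v2), (w2, w1)} \<inter> B. p \<in> C\<^sup>*"
    by blast
  show "\<forall>x \<in> {x1, x2, y1, y2}. (\<exists>a\<in>V. (x, a) \<in> C\<^sup>*) \<and> (\<exists>a\<in>V. (a, x) \<in> C\<^sup>*)"
    using paths old_vertices unfolding path_arcs_def by simp (meson walk)
qed

lemma strong_subdivided: "strong V' A'"
  by (rule strong_if_paths_kept[OF strong order.refl old_arcs' path_arcs_subset])

lemma old_edge_deletable:
  assumes "g \<in> D V E A" and "g \<notin> {{u1, v1}, {u2, v2}, {w2, w1}}"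
  shows "g \<in> D V' E' A'"
proof -
  have "g \<in> E" and strong_del: "strong V (restrict_arcs A g)"
    using assms(1) in_D_iff[OF orientation] by simp_all
  have "strong V' (restrict_arcs A' g)"
  proof (rule strong_if_paths_kept[OF strong_del])
    show "restrict_arcs A g \<subseteq> A"
      unfolding restrict_arcs_def by auto
    show "(a, b) \<in> restrict_arcs A' g"
      if "(a, b) \<in> restrict_arcs A g" "{a, b} \<notin> {{u1, v1}, {u2, v2}, {w2, w1}}" for a b
      by (rule old_arc_in_restrict) (use that in \<open>auto simp: restrict_arcs_def\<close>)
    show "path_arcs \<subseteq> restrict_arcs A' g"
      using path_arcs_subset new edge_subset[OF \<open>g \<in> E\<close>]
      unfolding path_arcs_def restrict_arcs_def by auto
  qed
  then show ?thesis
    using in_D_iff[OF orientation'] \<open>g \<in> E\<close> assms(2) unfolding E'_eq by simp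
qed

lemma attachment_edge_deletable:
  assumes "g \<in> {{x1, y1}, {x2, y2}}"
  shows "g \<in> D V' E' A'"
proof -
  have "\<not> g \<subseteq> V"
    using assms new by auto
  have "strong V' (restrict_arcs A' g)"
  proof (rule strong_if_paths_kept[OF strong order.refl])
    show "(a, b) \<in> restrict_arcs A' g"
      if "(a, b) \<in> A" "{a, b} \<notin> {{u1, v1}, {u2, v2}, {w2, w1}}" for a b
      using old_arc_in_restrict_new_edge that \<open>\<not> g \<subseteq> V\<close> .
    show "path_arcs \<subseteq> restrict_arcs A' g"
      using assms path_arcs_subset distinct_vertices distinct_vertices[symmetric] new old_vertices
      unfolding path_arcs_def restrict_arcs_def by (elim insertE) (simp_all add: doubleton_eq_iff)
  qed
  moreover have "g \<in> E'"
    using assms unfolding E'_eq by (elim insertE) simp_all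
  ultimately show ?thesis
    by (simp add: in_D_iff[OF orientation'])
qed

text \<open>The set \<open>N\<close> only serves to confine the search for the rerouting walks to a small,
  explicitly listed set of arcs of \<open>G'\<close>.\<close>

lemma path_arc_deletable:
  assumes "N \<subseteq> A'" and "(p, q) \<in> A'" and "{p, q} \<in> E'" and "p \<notin> V \<or> q \<notin> V"
    and "h \<in> D V E A"
    and rerouted: "\<forall>(a, b) \<in> {(u1, v1), (u2, v2), (w2, w1)}. {a, b} \<noteq> h \<longrightarrow>
                     (a, b) \<in> (N - {(p, q)})\<^sup>*"
    and reach: "\<forall>x \<in> {x1, x2, y1, y2}. (\<exists>a\<in>V. (x, a) \<in> (N - {(p, q)})\<^sup>*) \<and>
                                        (\<exists>a\<in>V. (a, x) \<in> (N - {(p, q)})\<^sup>*)"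
  shows "{p, q} \<in> D V' E' A'"
proof -
  have strong_del: "strong V (restrict_arcs A h)"
    using assms(5) in_D_iff[OF orientation] by simp
  have N_walks: "(N - {(p, q)})\<^sup>* \<subseteq> (A' - {(p, q)})\<^sup>*"
    using assms(1) by (intro rtrancl_mono) auto
  have "strong V' (A' - {(p, q)})"
  proof (rule strong_if_routes[OF strong_del])
    show "restrict_arcs A h \<subseteq> A"
      unfolding restrict_arcs_def by auto
    show "(a, b) \<in> A' - {(p, q)}"
      if "(a, b) \<in> restrict_arcs A h" "{a, b} \<notin> {{u1, v1}, {u2, v2}, {w2, w1}}" for a b
      using old_arc_in_restrict_new_edge[of a b "{p, q}"] that assms(4)
      unfolding restrict_arcs_arc[OF orientation' assms(2)] by (auto simp: restrict_arcs_def)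
    show "\<forall>p' \<in> {(u1, v1), (u2, v2), (w2, w1)} \<inter> restrict_arcs A h. p' \<in> (A' - {(p, q)})\<^sup>*"
      using rerouted N_walks unfolding restrict_arcs_def by auto
    show "\<forall>x \<in> {x1, x2, y1, y2}. (\<exists>a\<in>V. (x, a) \<in> (A' - {(p, q)})\<^sup>*) \<and>
                                 (\<exists>a\<in>V. (a, x) \<in> (A' - {(p, q)})\<^sup>*)"
      using reach N_walks by blast
  qed
  then show ?thesis
    using assms(3) by (simp add: in_D_iff[OF orientation'] restrict_arcs_arc[OF orientation' assms(2)])
qed

lemma path_edges_deletable_y1x1_x2y2:
  assumes "(y1, x1) \<in> A'" "(x2, y2) \<in> A'"
  shows "{{u1, x1}, {y1, w1}, {y2, w2}, {x2, v2}} \<subseteq> D V' E' A'"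
proof -
  define N where "N = insert (y1, x1) (insert (x2, y2) path_arcs)"
  have N: "N \<subseteq> A'"
    using assms path_arcs_subset unfolding N_def by simp
  note neq = distinct_vertices distinct_vertices[symmetric] new old_vertices
  note walk = insertI1 insertI2 converse_rtrancl_into_rtrancl rtrancl.rtrancl_refl old_vertices
  have "{u1, x1} \<in> D V' E' A'"
    by (rule path_arc_deletable[OF N arcs'(1) _ _ subdivided_deletable(1)])
      (simp_all add: N_def path_arcs_def E'_eq neq insert_commute insert_Diff_if, (meson walk)+)
  moreover have "{y1, w1} \<in> D V' E' A'"
    by (rule path_arc_deletable[OF N arcs'(3) _ _ subdivided_deletable(3)])
      (simp_all add: N_def path_arcs_def E'_eq neq insert_commute insert_Diff_if, (meson walk)+)
  moreover have "{w2, y2} \<in> D V' E' A'"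
    by (rule path_arc_deletable[OF N arcs'(5) _ _ subdivided_deletable(3)])
      (simp_all add: N_def path_arcs_def E'_eq neq insert_commute insert_Diff_if, (meson walk)+)
  moreover have "{x2, v2} \<in> D V' E' A'"
    by (rule path_arc_deletable[OF N arcs'(7) _ _ subdivided_deletable(2)])
      (simp_all add: N_def path_arcs_def E'_eq neq insert_commute insert_Diff_if, (meson walk)+)
  ultimately show ?thesis
    by (simp add: insert_commute)
qed

lemma path_edges_deletable_x1y1_y2x2:
  assumes "(x1, y1) \<in> A'" "(y2, x2) \<in> A'"
  shows "{{x1, v1}, {y1, y2}, {u2, x2}} \<subseteq> D V' E' A'"
proof -
  define N where "N = insert (x1, y1) (insert (y2, x2) path_arcs)"
  have N: "N \<subseteq> A'"
    using assms path_arcs_subset unfolding N_def by simp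
  note neq = distinct_vertices distinct_vertices[symmetric] new old_vertices
  note walk = insertI1 insertI2 converse_rtrancl_into_rtrancl rtrancl.rtrancl_refl old_vertices
  have "{x1, v1} \<in> D V' E' A'"
    by (rule path_arc_deletable[OF N arcs'(2) _ _ subdivided_deletable(1)])
      (simp_all add: N_def path_arcs_def E'_eq neq insert_commute insert_Diff_if, (meson walk)+)
  moreover have "{y2, y1} \<in> D V' E' A'"
    by (rule path_arc_deletable[OF N arcs'(4) _ _ subdivided_deletable(3)])
      (simp_all add: N_def path_arcs_def E'_eq neq insert_commute insert_Diff_if, (meson walk)+)
  moreover have "{u2, x2} \<in> D V' E' A'"
    by (rule path_arc_deletable[OF N arcs'(6) _ _ subdivided_deletable(2)])
      (simp_all add: N_def path_arcs_def E'_eq neq insert_commute insert_Diff_if, (meson walk)+)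
  ultimately show ?thesis
    by (simp add: insert_commute)
qed

end

theorem mainTheorem10:
  fixes V :: "'a set" and E :: "'a set set" and A :: "('a \<times> 'a) set"
    and u1 v1 u2 v2 w1 w2 x1 x2 y1 y2 :: 'a
    and V' :: "'a set" and E' :: "'a set set" and A' :: "('a \<times> 'a) set"
  assumes cub: "cubic V E"
    and so: "strong_orientation V E A"
    and e1: "{u1, v1} \<in> E" and e2: "{u2, v2} \<in> E" and f: "{w2, w1} \<in> E"
    and nonadj: "{u1, v1} \<inter> {u2, v2} = {}" "{u1, v1} \<inter> {w2, w1} = {}"
                "{u2, v2} \<inter> {w2, w1} = {}"
    and arcs: "(u1, v1) \<in> A" "(u2, v2) \<in> A" "(w2, w1) \<in> A"
    and del: "{u1, v1} \<in> D V E A" "{u2, v2} \<in> D V E A" "{w2, w1} \<in> D V E A"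
    and new: "x1 \<notin> V" "x2 \<notin> V" "y1 \<notin> V" "y2 \<notin> V"
    and newdist: "distinct [x1, x2, y1, y2]"
    and V'_def: "V' = V \<union> {x1, x2, y1, y2}"
    and E'_def: "E' = (E - {{u1, v1}, {u2, v2}, {w2, w1}}) \<union>
        {{u1, x1}, {x1, v1}, {u2, x2}, {x2, v2}, {w1, y1}, {y1, y2}, {y2, w2},
         {x1, y1}, {x2, y2}}"
    and or': "orientation V' E' A'"
    and arcs': "(u1, x1) \<in> A'" "(x1, v1) \<in> A'" "(y1, w1) \<in> A'" "(y2, y1) \<in> A'"
               "(w2, y2) \<in> A'" "(u2, x2) \<in> A'" "(x2, v2) \<in> A'"
    and agree: "\<And>a b. {a, b} \<in> E - {{u1, v1}, {u2, v2}, {w2, w1}} \<Longrightarrow>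
                  ((a, b) \<in> A' \<longleftrightarrow> (a, b) \<in> A)"
  shows "((y1, x1) \<in> A' \<and> (x2, y2) \<in> A' \<longrightarrow>
            strong V' A' \<and>
            (D V E A - {{u1, v1}, {u2, v2}, {w2, w1}}) \<union>
              {{u1, x1}, {x1, y1}, {y1, w1}, {y2, w2}, {x2, y2}, {x2, v2}} \<subseteq> D V' E' A')
       \<and> ((x1, y1) \<in> A' \<and> (y2, x2) \<in> A' \<longrightarrow>
            strong V' A' \<and>
            (D V E A - {{u1, v1}, {u2, v2}, {w2, w1}}) \<union>
              {{x1, v1}, {y1, y2}, {u2, x2}} \<subseteq> D V' E' A')"
proof -
  have orientation: "orientation V E A" and strong: "strong V A"
    using so by (simp_all add: strong_orientation_def)
  interpret subdivision_gadget V E A u1 v1 u2 v2 w1 w2 x1 x2 y1 y2 V' E' A'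
  proof
    show "simple_graph V E"
      using cub by (simp add: cubic_def)
    show "(a, b) \<in> A'" if "(a, b) \<in> A" "{a, b} \<notin> {{u1, v1}, {u2, v2}, {w2, w1}}" for a b
      using that agree orientation unfolding orientation_def by blast
  qed (fact orientation strong arcs del new newdist V'_def E'_def or' arcs')+
  have old: "D V E A - {{u1, v1}, {u2, v2}, {w2, w1}} \<subseteq> D V' E' A'"
    using old_edge_deletable by blast
  have attachment: "{x1, y1} \<in> D V' E' A'" "{x2, y2} \<in> D V' E' A'"
    by (simp_all add: attachment_edge_deletable)
  show ?thesis
    using strong_subdivided old attachment path_edges_deletable_y1x1_x2y2
      path_edges_deletable_x1y1_y2x2
    by simp
qed

end
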